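(* Let $W$ be a balanced word. The following are equivalent: (i) $W$ is reduced; (ii) $W$ does not contain a subword of the form $RL^nR$ with $n\ge 2$; (iii) $W=L^a(RL)^{k_1}R(RL)^{k_2}R\cdots(RL)^{k_m}RL^b$ for some integers $a,b,m\ge 0$ with $a+b=m$ and $k_i\ge 0$ for $1\le i\le m$.
   Context: Words are finite products of the letters $L,R$; a subword of $a_1\cdots a_n$ is a contiguous block $a_k\cdots a_l$. A word is balanced if it contains equally many $L$'s and $R$'s. A word is prime if it is nonempty, balanced, and cannot be written as a product of two nonempty balanced words. For a balanced word $W=a_1\cdots a_n$, $e_k(W)=\sum_{i=1}^k\overline{a_i}$ ($0\le k\le n$) with $\overline{R}=1$, $\overline{L}=-1$. A prime $P$ of length $n$ is an upper prime if $e_k(P)>0$ for $1\le k\le n-1$, and a lower prime if $e_k(P)<0$ for $1\le k\le n-1$. A word is reduced if it does not contain a subword of the form $UD$ with $U$ an upper prime and $D$ a lower prime. *)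

theory Defs
  imports Main
begin

datatype letter = L | R

type_synonym word = "letter list"

definition lval :: "letter \<Rightarrow> int" where
  "lval a = (if a = R then 1 else -1)"

definition count_letter :: "letter \<Rightarrow> word \<Rightarrow> nat" where
  "count_letter c w = length (filter (\<lambda>x. x = c) w)"

definition balanced :: "word \<Rightarrow> bool" where
  "balanced w \<longleftrightarrow> count_letter L w = count_letter R w"

definition prime_word :: "word \<Rightarrow> bool" where
  "prime_word w \<longleftrightarrow> w \<noteq> [] \<and> balanced w \<and>
     \<not> (\<exists>u v. u \<noteq> [] \<and> v \<noteq> [] \<and> balanced u \<and> balanced v \<and> w = u @ v)"

definition ek :: "nat \<Rightarrow> word \<Rightarrow> int" where
  "ek k w = sum_list (map lval (take k w))"

definition upper_prime :: "word \<Rightarrow> bool" where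
  "upper_prime p \<longleftrightarrow> prime_word p \<and> (\<forall>k. 1 \<le> k \<and> k \<le> length p - 1 \<longrightarrow> ek k p > 0)"

definition lower_prime :: "word \<Rightarrow> bool" where
  "lower_prime p \<longleftrightarrow> prime_word p \<and> (\<forall>k. 1 \<le> k \<and> k \<le> length p - 1 \<longrightarrow> ek k p < 0)"

definition subword :: "word \<Rightarrow> word \<Rightarrow> bool" where
  "subword s w \<longleftrightarrow> (\<exists>u v. w = u @ s @ v)"

definition reduced :: "word \<Rightarrow> bool" where
  "reduced w \<longleftrightarrow> \<not> (\<exists>U D. upper_prime U \<and> lower_prime D \<and> subword (U @ D) w)"

end

theory Submission
  imports Defs "HOL-Library.Sublist"
begin

(*
  Let height w be the number of R's minus the number of L's in w. An upper prime has the shape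
  R...L and a lower prime the shape L...R, so an adjacent pair U D contains R L^n R with n >= 2.
  Conversely, if a balanced word is A R L^n R B, cut L^n into L^i L^(n-i), with i chosen from
  the height of A, so that A R L^i has a nonempty suffix and L^(n-i) R B a nonempty prefix of
  nonnegative height. The first return of L^(n-i) R B to height 0 is then a lower prime, and
  (reading backwards) the last departure of A R L^i from height 0 an upper prime, adjacent at
  the cut.

  A word avoiding R L^n R, n >= 2, has at most one L between consecutive R's; grouping each R
  with the L that may follow it gives the blocks (RL)^k R, and the height of the whole word is
  then m - a - b.
*)

definition height :: "word \<Rightarrow> int" where
  "height w = sum_list (map lval w)"

lemma lval_simps [simp]: "lval R = 1" "lval L = -1"
  by (simp_all add: lval_def)

lemma lval_le_1: "lval c \<le> 1"
  by (cases c) simp_all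

lemma height_simps [simp]:
  "height [] = 0" "height (c # w) = lval c + height w" "height (u @ v) = height u + height v"
  by (simp_all add: height_def)

lemma height_replicate [simp]: "height (replicate n c) = int n * lval c"
  by (induction n) (simp_all add: algebra_simps)

lemma height_rev [simp]: "height (rev w) = height w"
  by (simp add: height_def rev_map [symmetric])

lemma ek_eq_height_take: "ek k w = height (take k w)"
  by (simp add: ek_def height_def)

lemma ek_Suc: "k < length w \<Longrightarrow> ek (Suc k) w = ek k w + lval (w ! k)"
  by (simp add: ek_eq_height_take take_Suc_conv_app_nth)

lemma ek_rev: "k \<le> length w \<Longrightarrow> ek k (rev w) = height w - ek (length w - k) w"
proof -
  have "height w = height (take (length w - k) w) + height (drop (length w - k) w)"
    by (simp flip: height_simps(3))
  then show ?thesis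
    by (simp add: ek_eq_height_take take_rev)
qed

lemma balanced_iff_height: "balanced w \<longleftrightarrow> height w = 0"
proof -
  have "height w = int (count_letter R w) - int (count_letter L w)"
  proof (induction w)
    case (Cons c w)
    then show ?case
      by (cases c) (simp_all add: count_letter_def)
  qed (simp add: count_letter_def)
  then show ?thesis
    by (auto simp: balanced_def)
qed

lemma prime_wordI:
  assumes "w \<noteq> []" "balanced w" "\<And>k. 0 < k \<Longrightarrow> k < length w \<Longrightarrow> ek k w \<noteq> 0"
  shows "prime_word w"
  unfolding prime_word_def
proof (intro conjI)
  show "w \<noteq> []" "balanced w"
    by (fact assms(1,2))+
  show "\<not> (\<exists>u v. u \<noteq> [] \<and> v \<noteq> [] \<and> balanced u \<and> balanced v \<and> w = u @ v)"
  proof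
    assume "\<exists>u v. u \<noteq> [] \<and> v \<noteq> [] \<and> balanced u \<and> balanced v \<and> w = u @ v"
    then obtain u v where "u \<noteq> []" "v \<noteq> []" "balanced u" "w = u @ v"
      by blast
    then have "ek (length u) w = 0" "0 < length u" "length u < length w"
      by (simp_all add: ek_eq_height_take balanced_iff_height)
    with assms(3) show False
      by blast
  qed
qed

lemma upper_primeI:
  assumes "w \<noteq> []" "balanced w" "\<And>k. 0 < k \<Longrightarrow> k < length w \<Longrightarrow> 0 < ek k w"
  shows "upper_prime w"
proof -
  have "prime_word w"
    using assms(1,2) by (rule prime_wordI) (metis assms(3) less_irrefl)
  moreover have "k < length w" if "1 \<le> k" "k \<le> length w - 1" for k
    using assms(1) that by (cases w) auto
  ultimately show ?thesis
    using assms(3) by (simp add: upper_prime_def)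
qed

lemma lower_primeI:
  assumes "w \<noteq> []" "balanced w" "\<And>k. 0 < k \<Longrightarrow> k < length w \<Longrightarrow> ek k w < 0"
  shows "lower_prime w"
proof -
  have "prime_word w"
    using assms(1,2) by (rule prime_wordI) (metis assms(3) less_irrefl)
  moreover have "k < length w" if "1 \<le> k" "k \<le> length w - 1" for k
    using assms(1) that by (cases w) auto
  ultimately show ?thesis
    using assms(3) by (simp add: lower_prime_def)
qed

lemma prime_wordE:
  assumes "prime_word w"
  obtains c u d where "w = c # u @ [d]" "lval c + height u + lval d = 0"
proof -
  have "height w = 0" "w \<noteq> []"
    using assms by (simp_all add: prime_word_def balanced_iff_height)
  moreover have "height [c] \<noteq> 0" for c
    by (cases c) simp_all
  ultimately obtain c u d where "w = c # u @ [d]"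
    by (metis append_Nil list.exhaust rev_exhaust)
  with \<open>height w = 0\<close> show thesis
    using that by simp
qed

lemma upper_prime_shape:
  assumes "upper_prime U"
  obtains u where "U = R # u @ [L]"
proof -
  obtain c u d where U: "U = c # u @ [d]" and h: "lval c + height u + lval d = 0"
    using assms prime_wordE unfolding upper_prime_def by blast
  have "0 < ek 1 U" "0 < ek (length U - 1) U"
    using assms U unfolding upper_prime_def by auto
  then have "0 < lval c" "0 < lval c + height u"
    using U by (simp_all add: ek_eq_height_take)
  with h have "c = R" "d = L"
    by (cases c; cases d; simp)+
  with U that show thesis
    by blast
qed

lemma lower_prime_shape:
  assumes "lower_prime D"
  obtains u where "D = L # u @ [R]"
proof -
  obtain c u d where D: "D = c # u @ [d]" and h: "lval c + height u + lval d = 0"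
    using assms prime_wordE unfolding lower_prime_def by blast
  have "ek 1 D < 0" "ek (length D - 1) D < 0"
    using assms D unfolding lower_prime_def by auto
  then have "lval c < 0" "lval c + height u < 0"
    using D by (simp_all add: ek_eq_height_take)
  with h have "c = L" "d = R"
    by (cases c; cases d; simp)+
  with D that show thesis
    by blast
qed

lemma upper_prime_rev_if_lower_prime:
  assumes "lower_prime D"
  shows "upper_prime (rev D)"
proof (rule upper_primeI)
  have "prime_word D" and neg: "\<And>k. 0 < k \<Longrightarrow> k < length D \<Longrightarrow> ek k D < 0"
    using assms by (auto simp: lower_prime_def)
  then show "rev D \<noteq> []" "balanced (rev D)"
    by (simp_all add: prime_word_def balanced_iff_height)
  show "0 < ek k (rev D)" if "0 < k" "k < length (rev D)" for k
    using that \<open>prime_word D\<close> neg[of "length D - k"]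
    by (simp add: prime_word_def balanced_iff_height ek_rev)
qed

lemma lower_prime_prefix_exists:
  assumes "hd Y = L" "prefix u Y" "u \<noteq> []" "0 \<le> height u"
  obtains D where "prefix D Y" "lower_prime D"
proof -
  define P where "P k \<longleftrightarrow> 0 < k \<and> k \<le> length Y \<and> 0 \<le> ek k Y" for k
  have "P (length u)"
    using assms(2-4) by (auto simp: P_def ek_eq_height_take prefix_def)
  define k where "k = (LEAST k. P k)"
  have Pk: "P k"
    unfolding k_def using \<open>P (length u)\<close> by (rule LeastI)
  have below: "ek i Y < 0" if "0 < i" "i < k" for i
    using not_less_Least[of i P] that Pk unfolding k_def P_def by auto
  have "Y \<noteq> []"
    using Pk by (auto simp: P_def)
  then have "ek 1 Y = -1"
    using assms(1) by (cases Y) (simp_all add: ek_eq_height_take)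
  then have "k \<noteq> 1"
    using Pk by (auto simp: P_def)
  then obtain j where j: "k = Suc j" "0 < j"
    using Pk by (cases k) (auto simp: P_def)
  \<comment> \<open>A single letter raises the height by at most one, so the first return is exactly to 0.\<close>
  have "ek k Y = ek j Y + lval (Y ! j)"
    using j Pk by (simp add: P_def ek_Suc)
  with below[of j] j Pk lval_le_1[of "Y ! j"] have "ek k Y = 0"
    by (simp add: P_def)
  have "lower_prime (take k Y)"
  proof (rule lower_primeI)
    show "take k Y \<noteq> []" "balanced (take k Y)"
      using Pk \<open>Y \<noteq> []\<close> \<open>ek k Y = 0\<close> by (simp_all add: P_def balanced_iff_height ek_eq_height_take)
    show "ek i (take k Y) < 0" if "0 < i" "i < length (take k Y)" for i
    proof -
      have "i < k"
        using that by simp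
      then show ?thesis
        using below[of i] that by (simp add: ek_eq_height_take min.absorb1)
    qed
  qed
  then show thesis
    using that take_is_prefix by blast
qed

lemma upper_prime_suffix_exists:
  assumes "last X = L" "suffix v X" "v \<noteq> []" "0 \<le> height v"
  obtains U where "suffix U X" "upper_prime U"
proof -
  have "X \<noteq> []"
    using assms(2,3) by (auto simp: suffix_def)
  then have "hd (rev X) = L"
    using assms(1) by (simp add: hd_rev)
  moreover have "prefix (rev v) (rev X)"
    using assms(2) by (simp add: suffix_to_prefix)
  ultimately obtain D where "prefix D (rev X)" "lower_prime D"
    using assms(3,4) lower_prime_prefix_exists[of "rev X" "rev v"] by auto
  then have "suffix (rev D) X" "upper_prime (rev D)"
    by (simp_all add: suffix_to_prefix upper_prime_rev_if_lower_prime)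
  then show thesis
    using that by blast
qed

definition contains_RLnR :: "word \<Rightarrow> bool" where
  "contains_RLnR w \<longleftrightarrow> (\<exists>n\<ge>2. subword ([R] @ replicate n L @ [R]) w)"

lemma subword_eq_sublist: "subword = sublist"
  by (auto simp: fun_eq_iff subword_def sublist_def)

lemma contains_RLnR_iff_split:
  "contains_RLnR w \<longleftrightarrow> (\<exists>n\<ge>2. \<exists>u v. w = u @ R # replicate n L @ R # v)"
  by (simp add: contains_RLnR_def subword_def)

lemma contains_RLnR_sublist: "contains_RLnR v \<Longrightarrow> sublist v w \<Longrightarrow> contains_RLnR w"
  unfolding contains_RLnR_def subword_eq_sublist by (meson sublist_order.order.trans)

lemma not_contains_RLnR_Nil [simp]: "\<not> contains_RLnR []"
  by (simp add: contains_RLnR_def subword_eq_sublist)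

lemma contains_RLnR_Cons_L [simp]: "contains_RLnR (L # w) \<longleftrightarrow> contains_RLnR w"
  by (simp add: contains_RLnR_def subword_eq_sublist sublist_Cons_right)

lemma contains_RLnR_replicate_L_append [simp]:
  "contains_RLnR (replicate n L @ w) \<longleftrightarrow> contains_RLnR w"
  by (induction n) simp_all

lemma not_contains_RLnR_replicate_L [simp]: "\<not> contains_RLnR (replicate n L)"
  using contains_RLnR_replicate_L_append[of n "[]"] by simp

lemma contains_RLnR_Cons_R:
  "contains_RLnR (R # w) \<longleftrightarrow> contains_RLnR w \<or> (\<exists>n\<ge>2. prefix (replicate n L @ [R]) w)"
  by (auto simp: contains_RLnR_def subword_eq_sublist sublist_Cons_right)

lemma prefix_replicate_L_R_iff:
  "prefix (replicate n L @ [R]) (replicate j L @ R # w) \<longleftrightarrow> n = j"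
proof (induction j arbitrary: n)
  case 0
  then show ?case
    by (cases n) simp_all
next
  case (Suc j)
  then show ?case
    by (cases n) simp_all
qed

lemma contains_RLnR_R_replicate_L_R:
  "contains_RLnR (R # replicate j L @ R # w) \<longleftrightarrow> 2 \<le> j \<or> contains_RLnR (R # w)"
  by (auto simp: contains_RLnR_Cons_R prefix_replicate_L_R_iff)

lemma not_contains_RLnR_R_replicate_L: "\<not> contains_RLnR (R # replicate n L)"
  by (auto simp: contains_RLnR_Cons_R dest!: set_mono_prefix)

lemma contains_RLnR_R_LL_R:
  assumes "R \<in> set x" "R \<in> set y"
  shows "contains_RLnR (x @ L # L # y)"
proof -
  have all_L: "z = replicate (length z) L" if "R \<notin> set z" for z
    using that by (metis letter.exhaust replicate_length_same)
  obtain x' p where x: "x = x' @ R # replicate p L"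
    using split_list_last[OF assms(1)] all_L by metis
  obtain q y' where y: "y = replicate q L @ R # y'"
    using split_list_first[OF assms(2)] all_L by metis
  have "x @ L # L # y = x' @ R # replicate (Suc (Suc (p + q))) L @ R # y'"
    unfolding x y by (simp add: replicate_app_Cons_same replicate_add)
  then show ?thesis
    unfolding contains_RLnR_iff_split by (metis le_add1 add_2_eq_Suc)
qed

definition block :: "nat \<Rightarrow> word" where
  "block k = concat (replicate k [R, L]) @ [R]"

lemma block_0: "block 0 = [R]"
  by (simp add: block_def)

lemma block_Suc: "block (Suc k) = R # L # block k"
  by (simp add: block_def)

lemma block_Cons: "block k = R # tl (block k)"
  by (cases k) (simp_all add: block_0 block_Suc)

lemma height_block [simp]: "height (block k) = 1"
  by (induction k) (simp_all add: block_0 block_Suc)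

definition blocks :: "nat list \<Rightarrow> word" where
  "blocks ks = concat (map block ks)"

lemma blocks_simps [simp]: "blocks [] = []" "blocks (k # ks) = block k @ blocks ks"
  by (simp_all add: blocks_def)

lemma height_blocks [simp]: "height (blocks ks) = int (length ks)"
  by (induction ks) simp_all

lemma contains_RLnR_R_block_append:
  "contains_RLnR (R # block k @ w) \<longleftrightarrow> contains_RLnR (block k @ w)"
  using contains_RLnR_R_replicate_L_R[of 0 "tl (block k) @ w"] by (subst (1 2) block_Cons) simp

lemma contains_RLnR_block_append:
  "contains_RLnR (block k @ w) \<longleftrightarrow> contains_RLnR (R # w)"
proof (induction k)
  case (Suc k)
  have "contains_RLnR (block (Suc k) @ w) \<longleftrightarrow> contains_RLnR (R # replicate 1 L @ block k @ w)"
    by (simp add: block_Suc)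
  also have "\<dots> \<longleftrightarrow> contains_RLnR (block k @ w)"
    using contains_RLnR_R_replicate_L_R[of 1 "tl (block k) @ w"] by (subst (1 2) block_Cons) simp
  finally show ?case
    using Suc.IH by simp
qed (simp add: block_0)

lemma contains_RLnR_blocks_append:
  "ks \<noteq> [] \<Longrightarrow> contains_RLnR (blocks ks @ w) \<longleftrightarrow> contains_RLnR (R # w)"
proof (induction ks)
  case (Cons k ks)
  then show ?case
    by (cases ks) (simp_all add: contains_RLnR_block_append contains_RLnR_R_block_append)
qed simp

lemma not_contains_RLnR_normal_form:
  "\<not> contains_RLnR (replicate a L @ blocks ks @ replicate b L)"
  by (cases "ks = []")
    (simp_all add: contains_RLnR_blocks_append not_contains_RLnR_R_replicate_L flip: append_Nil2)

lemma normal_form_Cons_R: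
  assumes "\<not> contains_RLnR (R # replicate a L @ blocks ks @ replicate b L)"
  obtains ks' b' where "R # replicate a L @ blocks ks @ replicate b L = blocks ks' @ replicate b' L"
proof (cases ks)
  case Nil
  then show thesis
    using that[of "[0]" "a + b"] by (simp add: block_0 replicate_add)
next
  case (Cons k ks')
  obtain t where "block k = R # t"
    using block_Cons by blast
  with assms Cons have "a \<le> 1"
    by (auto simp: contains_RLnR_R_replicate_L_R)
  then consider "a = 0" | "a = 1"
    by linarith
  then show thesis
  proof cases
    case 1
    then show thesis
      using that[of "0 # ks" b] by (simp add: block_0)
  next
    case 2
    then show thesis
      using that[of "Suc k # ks'" b] Cons by (simp add: block_Suc)
  qed
qed

lemma normal_form_exists:
  "\<not> contains_RLnR W \<Longrightarrow> \<exists>a ks b. W = replicate a L @ blocks ks @ replicate b L"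
proof (induction W)
  case Nil
  show ?case
    by (intro exI[of _ 0] exI[of _ "[]"]) simp
next
  case (Cons c W)
  then have "\<not> contains_RLnR W"
    using contains_RLnR_sublist[of W "c # W"] by (auto simp: sublist_Cons_right)
  with Cons.IH obtain a ks b where W: "W = replicate a L @ blocks ks @ replicate b L"
    by blast
  show ?case
  proof (cases c)
    case L
    with W have "c # W = replicate (Suc a) L @ blocks ks @ replicate b L"
      by simp
    then show ?thesis
      by blast
  next
    case R
    with W Cons.prems obtain ks' b' where "c # W = blocks ks' @ replicate b' L"
      using normal_form_Cons_R by metis
    then show ?thesis
      by (intro exI[of _ 0]) auto
  qed
qed

lemma not_contains_RLnR_iff_normal_form:
  assumes "balanced W"
  shows "\<not> contains_RLnR W \<longleftrightarrow>
    (\<exists>a ks b. a + b = length ks \<and> W = replicate a L @ blocks ks @ replicate b L)"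
proof
  assume "\<not> contains_RLnR W"
  then obtain a ks b where W: "W = replicate a L @ blocks ks @ replicate b L"
    using normal_form_exists by blast
  moreover have "a + b = length ks"
    using assms unfolding W balanced_iff_height by simp
  ultimately show "\<exists>a ks b. a + b = length ks \<and> W = replicate a L @ blocks ks @ replicate b L"
    by blast
qed (use not_contains_RLnR_normal_form in blast)

lemma contains_RLnR_if_not_reduced:
  assumes "\<not> reduced W"
  shows "contains_RLnR W"
proof -
  obtain U D where UD: "upper_prime U" "lower_prime D" "subword (U @ D) W"
    using assms unfolding reduced_def by blast
  obtain u u' where "U = R # u @ [L]" "D = L # u' @ [R]"
    using upper_prime_shape[OF UD(1)] lower_prime_shape[OF UD(2)] by metis
  then have "contains_RLnR (U @ D)"
    using contains_RLnR_R_LL_R[of "R # u" "u' @ [R]"] by simp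
  with UD(3) show ?thesis
    using contains_RLnR_sublist subword_eq_sublist by metis
qed

lemma not_reduced_at_cut:
  assumes "last X = L" "suffix v X" "v \<noteq> []" "0 \<le> height v"
    and "hd Y = L" "prefix u Y" "u \<noteq> []" "0 \<le> height u"
  shows "\<not> reduced (X @ Y)"
proof -
  obtain U where U: "suffix U X" "upper_prime U"
    using assms(1-4) by (rule upper_prime_suffix_exists)
  obtain D where D: "prefix D Y" "lower_prime D"
    using assms(5-8) by (rule lower_prime_prefix_exists)
  from U(1) D(1) have "subword (U @ D) (X @ Y)"
    unfolding subword_def suffix_def prefix_def by force
  with U(2) D(2) show ?thesis
    unfolding reduced_def by blast
qed

lemma not_reduced_if_contains_RLnR:
  assumes "balanced W" "contains_RLnR W"
  shows "\<not> reduced W"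
proof -
  obtain n A B where "2 \<le> n" and W: "W = A @ R # replicate n L @ R # B"
    using assms(2) unfolding contains_RLnR_iff_split by blast
  define h where "h = height A"
  have hB: "height B = int n - 2 - h"
    using assms(1) unfolding W h_def balanced_iff_height by simp
  \<comment> \<open>Cutting after the i-th L gives a left part of height h + 1 - i and a right part of
      height i - 1 - h; where the clamp to 1..n-1 is active, [R, L] resp. [L, R] is used instead.\<close>
  obtain i where i: "0 < i" "i < n" "i = 1 \<or> int i \<le> h + 1" "n = Suc i \<or> h + 1 \<le> int i"
    using \<open>2 \<le> n\<close> by (intro that[of "nat (max 1 (min (int n - 1) (h + 1)))"]) auto
  define X Y where "X = A @ R # replicate i L" and "Y = replicate (n - i) L @ R # B"
  have "W = X @ Y"
    using i unfolding W X_def Y_def by (simp flip: replicate_add)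
  have "last X = L" "hd Y = L"
    using i unfolding X_def Y_def by simp_all
  moreover have "\<exists>v. suffix v X \<and> v \<noteq> [] \<and> 0 \<le> height v"
  proof (cases "i = 1")
    case True
    then have "suffix [R, L] X"
      unfolding X_def by (simp add: suffix_def)
    then show ?thesis
      by fastforce
  next
    case False
    with i show ?thesis
      by (intro exI[of _ X]) (simp add: X_def h_def)
  qed
  moreover have "\<exists>u. prefix u Y \<and> u \<noteq> [] \<and> 0 \<le> height u"
  proof (cases "n = Suc i")
    case True
    then have "prefix [L, R] Y"
      unfolding Y_def by (simp add: prefix_def)
    then show ?thesis
      by fastforce
  next
    case False
    with i hB show ?thesis
      by (intro exI[of _ Y]) (simp add: Y_def)
  qed
  ultimately show ?thesis
    unfolding \<open>W = X @ Y\<close> using not_reduced_at_cut by metis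
qed

lemma reduced_iff_not_contains_RLnR:
  "balanced W \<Longrightarrow> reduced W \<longleftrightarrow> \<not> contains_RLnR W"
  using contains_RLnR_if_not_reduced not_reduced_if_contains_RLnR by blast

lemma map_nth_upt_shift: "map (\<lambda>i. xs ! (i - 1)) [1..<length xs + 1] = xs"
proof -
  have "[1..<length xs + 1] = map Suc [0..<length xs]"
    by (simp add: map_Suc_upt)
  then show ?thesis
    by (simp add: comp_def map_nth)
qed

lemma ex_indexed_normal_form_iff:
  "(\<exists>a b m (k :: nat \<Rightarrow> nat). a + b = m \<and>
      W = replicate a L @ concat (map (\<lambda>i. block (k i)) [1..<m+1]) @ replicate b L)
   \<longleftrightarrow> (\<exists>a ks b. a + b = length ks \<and> W = replicate a L @ blocks ks @ replicate b L)"
proof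
  assume "\<exists>a b m (k :: nat \<Rightarrow> nat). a + b = m \<and>
      W = replicate a L @ concat (map (\<lambda>i. block (k i)) [1..<m+1]) @ replicate b L"
  then obtain a b m k where "a + b = m"
      "W = replicate a L @ blocks (map k [1..<m+1]) @ replicate b L"
    by (auto simp: blocks_def comp_def)
  then show "\<exists>a ks b. a + b = length ks \<and> W = replicate a L @ blocks ks @ replicate b L"
    by (intro exI[of _ a] exI[of _ "map k [1..<m+1]"] exI[of _ b]) simp
next
  assume "\<exists>a ks b. a + b = length ks \<and> W = replicate a L @ blocks ks @ replicate b L"
  then obtain a ks b where ab: "a + b = length ks"
    and W: "W = replicate a L @ blocks ks @ replicate b L"
    by blast
  have "concat (map (\<lambda>i. block (ks ! (i - 1))) [1..<length ks + 1]) = blocks ks"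
    using arg_cong[where f = "map block", OF map_nth_upt_shift[of ks]]
    by (simp only: blocks_def map_map comp_def)
  then show "\<exists>a b m (k :: nat \<Rightarrow> nat). a + b = m \<and>
      W = replicate a L @ concat (map (\<lambda>i. block (k i)) [1..<m+1]) @ replicate b L"
    by (intro exI[of _ a] exI[of _ b] exI[of _ "length ks"] exI[of _ "\<lambda>i. ks ! (i - 1)"])
      (simp only: ab W)
qed

theorem proposition6p4:
  fixes W :: word
  assumes "balanced W"
  shows "(reduced W \<longleftrightarrow> \<not> (\<exists>n\<ge>2. subword ([R] @ replicate n L @ [R]) W))
       \<and> (\<not> (\<exists>n\<ge>2. subword ([R] @ replicate n L @ [R]) W) \<longleftrightarrow>
          (\<exists>a b m (k :: nat \<Rightarrow> nat). a + b = m \<and>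
             W = replicate a L @
                 concat (map (\<lambda>i. concat (replicate (k i) [R, L]) @ [R]) [1..<m+1]) @
                 replicate b L))"
  unfolding contains_RLnR_def[symmetric] block_def[symmetric] ex_indexed_normal_form_iff
  using reduced_iff_not_contains_RLnR not_contains_RLnR_iff_normal_form assms by blast

end
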